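(* Let $K$ be a binomial principal ideal domain. Every finitely generated $2$-nilpotent $K$-group without $K$-torsion is regular.
   Context: $K$-groups are nilpotent groups with exponents in the binomial domain $K$ (P. Hall). $Is(N)=\{x\in G: x^\alpha\in N\text{ for some }0\ne\alpha\in K\}$; $I(G)=Is(G')\cap Z(G)$; an addition is a $K$-subgroup $G_0\le Z(G)$ with $Z(G)=G_0\oplus I(G)$. $G$ is regular if $G=H\times G_0$ for some addition $G_0$ and some $K$-subgroup $H$ with $Is(H')\ge Z(H)$ (equivalently $Is(G'Z(G))=Is(G')Z(G)$). *)

theory Defs
  imports "HOL-Algebra.Group"
begin

definition binomial_domain :: "'k::idom itself \<Rightarrow> bool" where
  "binomial_domain _ \<longleftrightarrow>
     (\<forall>n::nat. n \<noteq> 0 \<longrightarrow> (of_nat n :: 'k) \<noteq> 0) \<and>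
     (\<forall>(a::'k) (n::nat). \<exists>b::'k. of_nat (fact n) * b = (\<Prod>i<n. a - of_nat i))"

definition is_ideal :: "'k::comm_ring_1 set \<Rightarrow> bool" where
  "is_ideal I \<longleftrightarrow> 0 \<in> I \<and> (\<forall>x\<in>I. \<forall>y\<in>I. x + y \<in> I) \<and> (\<forall>r. \<forall>x\<in>I. r * x \<in> I)"

definition principal_ideal_domain :: "'k::idom itself \<Rightarrow> bool" where
  "principal_ideal_domain _ \<longleftrightarrow>
     (\<forall>I::'k set. is_ideal I \<longrightarrow> (\<exists>g. I = {r * g | r. True}))"

definition kbinom :: "'k::idom \<Rightarrow> nat \<Rightarrow> 'k" where
  "kbinom a n = (THE b. of_nat (fact n) * b = (\<Prod>i<n. a - of_nat i))"

definition gcomm :: "('g, 'm) monoid_scheme \<Rightarrow> 'g \<Rightarrow> 'g \<Rightarrow> 'g" where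
  "gcomm G x y = inv\<^bsub>G\<^esub> x \<otimes>\<^bsub>G\<^esub> inv\<^bsub>G\<^esub> y \<otimes>\<^bsub>G\<^esub> x \<otimes>\<^bsub>G\<^esub> y"

definition nilpotent2 :: "('g, 'm) monoid_scheme \<Rightarrow> bool" where
  "nilpotent2 G \<longleftrightarrow> group G \<and>
     (\<forall>x\<in>carrier G. \<forall>y\<in>carrier G. \<forall>z\<in>carrier G.
        gcomm G x y \<otimes>\<^bsub>G\<^esub> z = z \<otimes>\<^bsub>G\<^esub> gcomm G x y)"

text \<open>P. Hall's K-group axioms for a group of class at most 2, with exponentiation
pw x a = x^a. In class at most 2 the Hall-Petresco words are
tau_1(x,y) = xy, tau_2(x,y) = [x,y], tau_i = 1 for i >= 3.\<close>

definition K_group2 :: "('g, 'm) monoid_scheme \<Rightarrow> ('g \<Rightarrow> 'k::idom \<Rightarrow> 'g) \<Rightarrow> bool" where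
  "K_group2 G pw \<longleftrightarrow> nilpotent2 G \<and>
     (\<forall>x\<in>carrier G. \<forall>a. pw x a \<in> carrier G) \<and>
     (\<forall>x\<in>carrier G. pw x 1 = x) \<and>
     (\<forall>x\<in>carrier G. \<forall>a b. pw x a \<otimes>\<^bsub>G\<^esub> pw x b = pw x (a + b)) \<and>
     (\<forall>x\<in>carrier G. \<forall>a b. pw (pw x a) b = pw x (a * b)) \<and>
     (\<forall>x\<in>carrier G. \<forall>h\<in>carrier G. \<forall>a.
        inv\<^bsub>G\<^esub> h \<otimes>\<^bsub>G\<^esub> pw x a \<otimes>\<^bsub>G\<^esub> h = pw (inv\<^bsub>G\<^esub> h \<otimes>\<^bsub>G\<^esub> x \<otimes>\<^bsub>G\<^esub> h) a) \<and>
     (\<forall>x\<in>carrier G. \<forall>y\<in>carrier G. \<forall>a.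
        pw x a \<otimes>\<^bsub>G\<^esub> pw y a = pw (x \<otimes>\<^bsub>G\<^esub> y) a \<otimes>\<^bsub>G\<^esub> pw (gcomm G x y) (kbinom a 2))"

definition K_subgroup :: "('g, 'm) monoid_scheme \<Rightarrow> ('g \<Rightarrow> 'k \<Rightarrow> 'g) \<Rightarrow> 'g set \<Rightarrow> bool" where
  "K_subgroup G pw H \<longleftrightarrow> subgroup H G \<and> (\<forall>x\<in>H. \<forall>a. pw x a \<in> H)"

definition K_gen :: "('g, 'm) monoid_scheme \<Rightarrow> ('g \<Rightarrow> 'k \<Rightarrow> 'g) \<Rightarrow> 'g set \<Rightarrow> 'g set" where
  "K_gen G pw S = \<Inter>{H. K_subgroup G pw H \<and> S \<subseteq> H}"

definition K_finitely_generated :: "('g, 'm) monoid_scheme \<Rightarrow> ('g \<Rightarrow> 'k \<Rightarrow> 'g) \<Rightarrow> bool" where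
  "K_finitely_generated G pw \<longleftrightarrow>
     (\<exists>S. finite S \<and> S \<subseteq> carrier G \<and> K_gen G pw S = carrier G)"

definition K_torsion_free :: "('g, 'm) monoid_scheme \<Rightarrow> ('g \<Rightarrow> 'k::idom \<Rightarrow> 'g) \<Rightarrow> bool" where
  "K_torsion_free G pw \<longleftrightarrow>
     (\<forall>x\<in>carrier G. \<forall>a. a \<noteq> 0 \<longrightarrow> pw x a = \<one>\<^bsub>G\<^esub> \<longrightarrow> x = \<one>\<^bsub>G\<^esub>)"

text \<open>Notions relative to a K-subgroup H of G (take H = carrier G for G itself).\<close>

definition derived :: "('g, 'm) monoid_scheme \<Rightarrow> ('g \<Rightarrow> 'k \<Rightarrow> 'g) \<Rightarrow> 'g set \<Rightarrow> 'g set" where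
  "derived G pw H = K_gen G pw {gcomm G x y | x y. x \<in> H \<and> y \<in> H}"

definition center_of :: "('g, 'm) monoid_scheme \<Rightarrow> 'g set \<Rightarrow> 'g set" where
  "center_of G H = {x \<in> H. \<forall>y\<in>H. x \<otimes>\<^bsub>G\<^esub> y = y \<otimes>\<^bsub>G\<^esub> x}"

definition isolator :: "('g, 'm) monoid_scheme \<Rightarrow> ('g \<Rightarrow> 'k::idom \<Rightarrow> 'g) \<Rightarrow> 'g set \<Rightarrow> 'g set \<Rightarrow> 'g set" where
  "isolator G pw H N = {x \<in> H. \<exists>a. a \<noteq> 0 \<and> pw x a \<in> N}"

definition I_of :: "('g, 'm) monoid_scheme \<Rightarrow> ('g \<Rightarrow> 'k::idom \<Rightarrow> 'g) \<Rightarrow> 'g set" where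
  "I_of G pw = isolator G pw (carrier G) (derived G pw (carrier G)) \<inter> center_of G (carrier G)"

definition is_addition :: "('g, 'm) monoid_scheme \<Rightarrow> ('g \<Rightarrow> 'k::idom \<Rightarrow> 'g) \<Rightarrow> 'g set \<Rightarrow> bool" where
  "is_addition G pw G0 \<longleftrightarrow> K_subgroup G pw G0 \<and> G0 \<subseteq> center_of G (carrier G) \<and>
     G0 \<inter> I_of G pw = {\<one>\<^bsub>G\<^esub>} \<and>
     {a \<otimes>\<^bsub>G\<^esub> b | a b. a \<in> G0 \<and> b \<in> I_of G pw} = center_of G (carrier G)"

text \<open>Regular: G = H x G0 (internal direct product) for an addition G0 and a
K-subgroup H with Is(H') \<supseteq> Z(H). (G0 is central, so H and G0 are normal and commute.)\<close>
definition K_regular :: "('g, 'm) monoid_scheme \<Rightarrow> ('g \<Rightarrow> 'k::idom \<Rightarrow> 'g) \<Rightarrow> bool" where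
  "K_regular G pw \<longleftrightarrow> (\<exists>G0 H. is_addition G pw G0 \<and> K_subgroup G pw H \<and>
     center_of G H \<subseteq> isolator G pw H (derived G pw H) \<and>
     H \<inter> G0 = {\<one>\<^bsub>G\<^esub>} \<and>
     {h \<otimes>\<^bsub>G\<^esub> g | h g. h \<in> H \<and> g \<in> G0} = carrier G)"

end

theory Submission
  imports Defs "HOL-Algebra.Coset"
begin

text \<open>Torsion-freeness makes \<open>I(G) = Is(G')\<close> central and isolated, and since all commutators lie
  in \<open>I(G)\<close>, the quotient \<open>G/I(G)\<close> is a finitely generated torsion-free \<open>K\<close>-module in which
  \<open>Z(G)/I(G)\<close> is a pure submodule. Over a principal ideal domain the quotient by a pure submodule
  of a finitely generated module is free, so \<open>Z(G)/I(G)\<close> has a complement \<open>H/I(G)\<close>, and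
  \<open>Z(G)/I(G)\<close> is itself free. Lifting a basis of it to \<open>Z(G)\<close> gives an addition \<open>G\<^sub>0\<close> with
  \<open>G = H \<times> G\<^sub>0\<close>. Because \<open>G\<^sub>0\<close> is central, \<open>H' = G'\<close> and \<open>Z(H) \<subseteq> Z(G) \<inter> H \<subseteq> I(G)\<close>,
  which gives \<open>Z(H) \<subseteq> Is(H')\<close>.\<close>

section \<open>Modules over an integral domain\<close>

fun lincomb :: "('a \<Rightarrow> 'a \<Rightarrow> 'a) \<Rightarrow> 'a \<Rightarrow> ('k \<Rightarrow> 'a \<Rightarrow> 'a) \<Rightarrow> (nat \<Rightarrow> 'k) \<Rightarrow> (nat \<Rightarrow> 'a) \<Rightarrow> nat \<Rightarrow> 'a"
  where
    "lincomb add zr sm c v 0 = zr"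
  | "lincomb add zr sm c v (Suc n) = add (lincomb add zr sm c v n) (sm (c n) (v n))"

locale kmodule =
  fixes A :: "'a set" and add :: "'a \<Rightarrow> 'a \<Rightarrow> 'a" and zr :: 'a and sm :: "'k::idom \<Rightarrow> 'a \<Rightarrow> 'a"
  assumes add_closed: "x \<in> A \<Longrightarrow> y \<in> A \<Longrightarrow> add x y \<in> A"
    and zr_closed: "zr \<in> A"
    and sm_closed: "x \<in> A \<Longrightarrow> sm a x \<in> A"
    and add_assoc: "x \<in> A \<Longrightarrow> y \<in> A \<Longrightarrow> z \<in> A \<Longrightarrow> add (add x y) z = add x (add y z)"
    and add_comm: "x \<in> A \<Longrightarrow> y \<in> A \<Longrightarrow> add x y = add y x"
    and zr_add: "x \<in> A \<Longrightarrow> add zr x = x"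
    and sm_distl: "x \<in> A \<Longrightarrow> sm (a + b) x = add (sm a x) (sm b x)"
    and sm_distr: "x \<in> A \<Longrightarrow> y \<in> A \<Longrightarrow> sm a (add x y) = add (sm a x) (sm a y)"
    and sm_sm: "x \<in> A \<Longrightarrow> sm a (sm b x) = sm (a * b) x"
    and sm_one: "x \<in> A \<Longrightarrow> sm 1 x = x"
    and sm_zero: "x \<in> A \<Longrightarrow> sm 0 x = zr"
begin

abbreviation comb :: "(nat \<Rightarrow> 'k) \<Rightarrow> (nat \<Rightarrow> 'a) \<Rightarrow> nat \<Rightarrow> 'a" where
  "comb \<equiv> lincomb add zr sm"

lemma add_zr: "x \<in> A \<Longrightarrow> add x zr = x"
  using add_comm zr_add zr_closed by metis

lemma add_neg: "x \<in> A \<Longrightarrow> add x (sm (-1) x) = zr"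
  by (metis sm_distl sm_one sm_zero add.right_inverse)

lemma sm_zr: "sm a zr = zr"
  by (metis sm_sm sm_zero zr_closed mult_zero_right)

lemma add_add_swap: "a \<in> A \<Longrightarrow> b \<in> A \<Longrightarrow> c \<in> A \<Longrightarrow> d \<in> A \<Longrightarrow>
    add (add a b) (add c d) = add (add a c) (add b d)"
  by (metis add_assoc add_comm add_closed)

lemma sm_commute: "x \<in> A \<Longrightarrow> sm a (sm b x) = sm b (sm a x)"
  by (simp add: sm_sm mult.commute)

definition submodule :: "'a set \<Rightarrow> bool" where
  "submodule S \<longleftrightarrow> S \<subseteq> A \<and> zr \<in> S \<and> (\<forall>x\<in>S. \<forall>y\<in>S. add x y \<in> S) \<and> (\<forall>x\<in>S. \<forall>a. sm a x \<in> S)"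

definition pure :: "'a set \<Rightarrow> bool" where
  "pure S \<longleftrightarrow> (\<forall>x\<in>A. \<forall>a. a \<noteq> 0 \<longrightarrow> sm a x \<in> S \<longrightarrow> x \<in> S)"

lemma submoduleD:
  assumes "submodule S"
  shows submodule_subset: "S \<subseteq> A" and submodule_zr: "zr \<in> S"
    and submodule_add: "x \<in> S \<Longrightarrow> y \<in> S \<Longrightarrow> add x y \<in> S"
    and submodule_sm: "x \<in> S \<Longrightarrow> sm a x \<in> S"
  using assms unfolding submodule_def by blast+

lemma submodule_cancel:
  assumes S: "submodule S" and x: "x \<in> S" and y: "y \<in> A" and xy: "add x y \<in> S"
  shows "y \<in> S"
proof -
  have xA: "x \<in> A" using x submodule_subset[OF S] by blast
  have "add (sm (-1) x) (add x y) = add (add x (sm (-1) x)) y"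
    using xA y sm_closed add_assoc add_comm by metis
  also have "\<dots> = y" using xA y add_neg zr_add by simp
  finally show ?thesis using submoduleD[OF S] x xy by metis
qed

lemma submodule_kmodule: "submodule S \<Longrightarrow> kmodule S add zr sm"
  unfolding submodule_def
  by unfold_locales (auto intro: add_assoc add_comm zr_add sm_distl sm_distr sm_sm sm_one sm_zero)

lemma comb_closed: "\<forall>i<n. v i \<in> A \<Longrightarrow> comb c v n \<in> A"
  by (induction n) (auto intro: add_closed zr_closed sm_closed)

lemma comb_in_submodule: "submodule S \<Longrightarrow> \<forall>i<n. v i \<in> S \<Longrightarrow> comb c v n \<in> S"
  by (induction n) (auto simp: submodule_def)

lemma comb_cong: "\<forall>i<n. c i = c' i \<and> v i = v' i \<Longrightarrow> comb c v n = comb c' v' n"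
  by (induction n) auto

lemma comb_zero_coeffs: "\<forall>i<n. c i = 0 \<Longrightarrow> \<forall>i<n. v i \<in> A \<Longrightarrow> comb c v n = zr"
  by (induction n) (auto simp: sm_zero add_zr zr_closed)

lemma comb_add_vectors: "\<forall>i<n. u i \<in> A \<and> v i \<in> A \<Longrightarrow>
    comb c (\<lambda>i. add (u i) (v i)) n = add (comb c u n) (comb c v n)"
  by (induction n) (simp_all add: zr_add zr_closed sm_distr add_add_swap comb_closed sm_closed)

lemma comb_add_coeffs: "\<forall>i<n. v i \<in> A \<Longrightarrow>
    comb (\<lambda>i. c i + d i) v n = add (comb c v n) (comb d v n)"
  by (induction n) (simp_all add: zr_add zr_closed sm_distl add_add_swap comb_closed sm_closed)

lemma sm_comb: "\<forall>i<n. v i \<in> A \<Longrightarrow> sm a (comb c v n) = comb (\<lambda>i. a * c i) v n"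
  by (induction n) (auto simp: sm_zr sm_distr comb_closed sm_closed sm_sm)

definition span :: "(nat \<Rightarrow> 'a) \<Rightarrow> nat \<Rightarrow> 'a set" where
  "span v n = range (\<lambda>c. comb c v n)"

lemma span_submodule:
  assumes v: "\<forall>i<n. v i \<in> A"
  shows "submodule (span v n)"
  unfolding submodule_def span_def
proof (intro conjI ballI allI)
  show "range (\<lambda>c. comb c v n) \<subseteq> A" using comb_closed[OF v] by blast
  have "zr = comb (\<lambda>_. 0) v n" using comb_zero_coeffs v by simp
  then show "zr \<in> range (\<lambda>c. comb c v n)" by blast
  fix x assume "x \<in> range (\<lambda>c. comb c v n)"
  then obtain c where x: "x = comb c v n" by blast
  {
    fix y assume "y \<in> range (\<lambda>c. comb c v n)"
    then obtain d where y: "y = comb d v n" by blast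
    have "add x y = comb (\<lambda>i. c i + d i) v n" using comb_add_coeffs[OF v, of c d] x y by simp
    then show "add x y \<in> range (\<lambda>c. comb c v n)" by blast
  }
  fix a
  show "sm a x \<in> range (\<lambda>c. comb c v n)" using sm_comb[OF v, of a c] x by simp
qed

lemma unit_vector_in_span:
  assumes v: "\<forall>i<n. v i \<in> A" and "i < n"
  shows "v i \<in> span v n"
proof -
  have "comb (\<lambda>j. if j = i then 1 else 0) v k = (if i < k then v i else zr)" if "k \<le> n" for k
    using that
  proof (induction k)
    case (Suc k)
    then show ?case
      using v \<open>i < n\<close> sm_zero sm_one add_zr zr_add zr_closed less_Suc_eq by auto
  qed simp
  then show ?thesis using \<open>i < n\<close> unfolding span_def by (metis order_refl rangeI)
qed

definition generates_mod :: "'a set \<Rightarrow> (nat \<Rightarrow> 'a) \<Rightarrow> nat \<Rightarrow> bool" where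
  "generates_mod Q v n \<longleftrightarrow> (\<forall>i<n. v i \<in> A) \<and> (\<forall>x\<in>A. \<exists>q\<in>Q. \<exists>c. x = add q (comb c v n))"

definition independent_mod :: "'a set \<Rightarrow> (nat \<Rightarrow> 'a) \<Rightarrow> nat \<Rightarrow> bool" where
  "independent_mod Q v n \<longleftrightarrow> (\<forall>c. comb c v n \<in> Q \<longrightarrow> (\<forall>i<n. c i = 0))"

lemma generates_mod_mono: "Q \<subseteq> Q' \<Longrightarrow> generates_mod Q v n \<Longrightarrow> generates_mod Q' v n"
  unfolding generates_mod_def by blast

lemma generates_mod_span:
  "generates_mod Q v n \<Longrightarrow> \<forall>x\<in>A. \<exists>q\<in>Q. \<exists>s\<in>span v n. x = add q s"
  unfolding generates_mod_def span_def by blast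

lemma independent_mod_inter_span:
  assumes "independent_mod Q v n" and "\<forall>i<n. v i \<in> A"
  shows "Q \<inter> span v n \<subseteq> {zr}"
proof
  fix x assume "x \<in> Q \<inter> span v n"
  then obtain c where "x = comb c v n" "comb c v n \<in> Q" unfolding span_def by blast
  then show "x \<in> {zr}" using assms comb_zero_coeffs unfolding independent_mod_def by auto
qed

lemma generates_mod_drop_last:
  assumes Q': "submodule Q'" and "Q \<subseteq> Q'" and "g m \<in> Q'" and gen: "generates_mod Q g (Suc m)"
  shows "generates_mod Q' g m"
  unfolding generates_mod_def
proof (intro conjI ballI)
  show gA: "\<forall>i<m. g i \<in> A" using gen unfolding generates_mod_def by simp
  fix x assume "x \<in> A"
  then obtain q c where q: "q \<in> Q" and x: "x = add q (comb c g (Suc m))"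
    using gen unfolding generates_mod_def by blast
  have qA: "q \<in> A" and gmA: "g m \<in> A"
    using q \<open>Q \<subseteq> Q'\<close> \<open>g m \<in> Q'\<close> submodule_subset[OF Q'] by blast+
  have "x = add (add q (sm (c m) (g m))) (comb c g m)"
    using x qA gmA comb_closed[OF gA] sm_closed add_assoc add_comm by simp
  moreover have "add q (sm (c m) (g m)) \<in> Q'"
    using q \<open>Q \<subseteq> Q'\<close> \<open>g m \<in> Q'\<close> submoduleD[OF Q'] by blast
  ultimately show "\<exists>q\<in>Q'. \<exists>c. x = add q (comb c g m)" by blast
qed

text \<open>The new generators are the projections of the old ones to \<open>Q'\<close> along \<open>span e n\<close>.\<close>

lemma generates_mod_larger_submodule:
  assumes Q: "submodule Q" and Q': "submodule Q'" and QQ': "Q \<subseteq> Q'"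
    and g: "generates_mod Q g m" and e: "generates_mod Q' e n" and ind: "independent_mod Q' e n"
  shows "\<exists>w. (\<forall>i<m. w i \<in> Q') \<and> (\<forall>x\<in>Q'. \<exists>q\<in>Q. \<exists>c. x = add q (comb c w m))"
proof -
  have eA: "\<forall>i<n. e i \<in> A" and gA: "\<forall>i<m. g i \<in> A"
    using e g unfolding generates_mod_def by blast+
  have QA: "Q \<subseteq> A" and Q'A: "Q' \<subseteq> A" using Q Q' submodule_subset by blast+
  have sp: "submodule (span e n)" using span_submodule[OF eA] .
  have "\<forall>i<m. \<exists>w E. w \<in> Q' \<and> E \<in> span e n \<and> g i = add w E"
    using e gA unfolding generates_mod_def span_def by blast
  then obtain w E where wE: "\<forall>i<m. w i \<in> Q' \<and> E i \<in> span e n \<and> g i = add (w i) (E i)"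
    by metis
  have wA: "\<forall>i<m. w i \<in> A" and EA: "\<forall>i<m. E i \<in> A"
    using wE Q'A submodule_subset[OF sp] by blast+
  have "\<exists>q\<in>Q. \<exists>c. x = add q (comb c w m)" if x: "x \<in> Q'" for x
  proof -
    obtain q c where q: "q \<in> Q" and xq: "x = add q (comb c g m)"
      using g x Q'A unfolding generates_mod_def by blast
    have "comb c g m = comb c (\<lambda>i. add (w i) (E i)) m" using wE by (intro comb_cong) auto
    also have "\<dots> = add (comb c w m) (comb c E m)" using comb_add_vectors wA EA by blast
    finally have eq: "x = add (add q (comb c w m)) (comb c E m)"
      using xq add_assoc q QA comb_closed wA EA by auto
    have qw: "add q (comb c w m) \<in> Q'"
      using q QQ' comb_in_submodule[OF Q'] wE submodule_add[OF Q'] by blast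
    have "comb c E m \<in> Q'"
      using submodule_cancel[OF Q' qw] eq x comb_closed[OF EA] by auto
    moreover obtain d where d: "comb c E m = comb d e n"
      using comb_in_submodule[OF sp] wE unfolding span_def by blast
    ultimately have "\<forall>i<n. d i = 0" using ind unfolding independent_mod_def by auto
    then have "comb c E m = zr" using d comb_zero_coeffs eA by auto
    then have "x = add q (comb c w m)"
      using eq add_zr q QA comb_closed wA add_closed by auto
    then show ?thesis using q by blast
  qed
  then show ?thesis using wE by blast
qed

definition adjoin :: "'a set \<Rightarrow> 'a \<Rightarrow> 'a set" where
  "adjoin Q g = {add q (sm b g) | q b. q \<in> Q}"

definition pure_closure :: "'a set \<Rightarrow> 'a set" where
  "pure_closure P = {x \<in> A. \<exists>a. a \<noteq> 0 \<and> sm a x \<in> P}"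

lemma adjoin_submodule:
  assumes Q: "submodule Q" and g: "g \<in> A"
  shows "submodule (adjoin Q g)"
  unfolding submodule_def
proof (intro conjI ballI allI subsetI)
  have QA: "Q \<subseteq> A" using submodule_subset[OF Q] .
  show "x \<in> A" if x: "x \<in> adjoin Q g" for x
  proof -
    obtain q b where "q \<in> Q" "x = add q (sm b g)" using x unfolding adjoin_def by blast
    then show ?thesis using QA g add_closed sm_closed by blast
  qed
  have "zr = add zr (sm 0 g)" using g sm_zero zr_add zr_closed by simp
  then show "zr \<in> adjoin Q g" using submodule_zr[OF Q] unfolding adjoin_def by blast
  fix x assume "x \<in> adjoin Q g"
  then obtain q b where q: "q \<in> Q" "x = add q (sm b g)" unfolding adjoin_def by blast
  have qA: "q \<in> A" using q QA by blast
  {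
    fix y assume "y \<in> adjoin Q g"
    then obtain q' b' where q': "q' \<in> Q" "y = add q' (sm b' g)" unfolding adjoin_def by blast
    have "add x y = add (add q q') (sm (b + b') g)"
      using q q' qA QA g add_add_swap sm_closed sm_distl by auto
    then show "add x y \<in> adjoin Q g"
      using q q' submodule_add[OF Q] unfolding adjoin_def by blast
  }
  fix a
  have "sm a x = add (sm a q) (sm (a * b) g)"
    using q qA g sm_distr sm_closed sm_sm by simp
  then show "sm a x \<in> adjoin Q g"
    using q submodule_sm[OF Q] unfolding adjoin_def by blast
qed

lemma subset_adjoin:
  assumes Q: "submodule Q" and g: "g \<in> A"
  shows "Q \<subseteq> adjoin Q g"
proof
  fix q assume "q \<in> Q"
  moreover have "q = add q (sm 0 g)" using calculation submodule_subset[OF Q] g sm_zero add_zr by auto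
  ultimately show "q \<in> adjoin Q g" unfolding adjoin_def by blast
qed

lemma mem_adjoin:
  assumes Q: "submodule Q" and g: "g \<in> A"
  shows "g \<in> adjoin Q g"
proof -
  have "g = add zr (sm 1 g)" using g zr_add sm_one by simp
  then show ?thesis using submodule_zr[OF Q] unfolding adjoin_def by blast
qed

lemma pure_closure_submodule:
  assumes P: "submodule P"
  shows "submodule (pure_closure P)"
  unfolding submodule_def pure_closure_def
proof (intro conjI ballI allI)
  show "zr \<in> {x \<in> A. \<exists>a. a \<noteq> 0 \<and> sm a x \<in> P}"
    using zr_closed sm_zr submodule_zr[OF P] by (auto intro!: exI[of _ 1])
  fix x assume "x \<in> {x \<in> A. \<exists>a. a \<noteq> 0 \<and> sm a x \<in> P}"
  then obtain a where x: "x \<in> A" "a \<noteq> 0" "sm a x \<in> P" by blast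
  {
    fix y assume "y \<in> {x \<in> A. \<exists>a. a \<noteq> 0 \<and> sm a x \<in> P}"
    then obtain b where y: "y \<in> A" "b \<noteq> 0" "sm b y \<in> P" by blast
    have "sm (a * b) (add x y) = add (sm b (sm a x)) (sm a (sm b y))"
      using x y sm_distr sm_sm sm_closed by (simp add: mult.commute)
    then have "sm (a * b) (add x y) \<in> P" using x y submoduleD[OF P] by simp
    then show "add x y \<in> {x \<in> A. \<exists>a. a \<noteq> 0 \<and> sm a x \<in> P}"
      using x y add_closed by (auto intro!: exI[of _ "a * b"])
  }
  fix c
  have "sm a (sm c x) = sm c (sm a x)" using sm_commute x by simp
  then show "sm c x \<in> {x \<in> A. \<exists>a. a \<noteq> 0 \<and> sm a x \<in> P}"
    using x submodule_sm[OF P] sm_closed by auto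
qed auto

lemma pure_pure_closure: "pure (pure_closure P)"
  unfolding pure_def pure_closure_def
proof (intro ballI allI impI)
  fix x a assume x: "x \<in> A" and a: "a \<noteq> 0" and "sm a x \<in> {x \<in> A. \<exists>b. b \<noteq> 0 \<and> sm b x \<in> P}"
  then obtain b where "b \<noteq> 0" "sm b (sm a x) \<in> P" by blast
  then show "x \<in> {x \<in> A. \<exists>b. b \<noteq> 0 \<and> sm b x \<in> P}"
    using x a sm_sm by (auto intro!: exI[of _ "b * a"])
qed

lemma subset_pure_closure:
  assumes "submodule P"
  shows "P \<subseteq> pure_closure P"
proof
  fix x assume "x \<in> P"
  moreover have "x \<in> A" using calculation submodule_subset[OF assms] by blast
  moreover have "sm 1 x = x" using calculation sm_one by blast
  ultimately show "x \<in> pure_closure P" unfolding pure_closure_def by (auto intro!: exI[of _ 1])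
qed

lemma pure_closure_adjoin:
  assumes Q: "submodule Q" and g: "g \<in> A"
  shows "submodule (pure_closure (adjoin Q g))" "Q \<subseteq> pure_closure (adjoin Q g)"
    "g \<in> pure_closure (adjoin Q g)"
proof -
  have P: "submodule (adjoin Q g)" using adjoin_submodule[OF Q g] .
  show "submodule (pure_closure (adjoin Q g))" using pure_closure_submodule[OF P] .
  show "Q \<subseteq> pure_closure (adjoin Q g)"
    using subset_adjoin[OF Q g] subset_pure_closure[OF P] by (rule subset_trans)
  show "g \<in> pure_closure (adjoin Q g)"
    using subset_pure_closure[OF P] mem_adjoin[OF Q g] by (rule subsetD)
qed

lemma comb_multiplier:
  assumes P: "submodule P" and w: "\<forall>i<m. w i \<in> pure_closure P"
  shows "\<exists>d. d \<noteq> 0 \<and> (\<forall>c. sm d (comb c w m) \<in> P)"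
proof -
  have wA: "\<forall>i<m. w i \<in> A" using w unfolding pure_closure_def by blast
  have "\<exists>d. d \<noteq> 0 \<and> (\<forall>c. sm d (comb c w j) \<in> P)" if "j \<le> m" for j
    using that
  proof (induction j)
    case 0
    then show ?case using sm_zr submodule_zr[OF P] by (auto intro!: exI[of _ 1])
  next
    case (Suc j)
    then obtain d where d: "d \<noteq> 0" "\<forall>c. sm d (comb c w j) \<in> P" by auto
    have "j < m" using Suc.prems by simp
    then obtain a where a: "a \<noteq> 0" "sm a (w j) \<in> P"
      using w unfolding pure_closure_def by blast
    have wj: "w j \<in> A" using wA \<open>j < m\<close> by blast
    have "sm (a * d) (comb c w (Suc j)) \<in> P" for c
    proof -
      have cA: "comb c w j \<in> A" using wA \<open>j < m\<close> by (intro comb_closed) simp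
      have "sm (a * d) (comb c w (Suc j))
          = add (sm (a * d) (comb c w j)) (sm (a * d) (sm (c j) (w j)))"
        using cA wj sm_closed sm_distr by simp
      also have "sm (a * d) (comb c w j) = sm a (sm d (comb c w j))" using cA sm_sm by simp
      also have "sm (a * d) (sm (c j) (w j)) = sm (c j * d) (sm a (w j))"
        using wj sm_sm by (simp add: mult.commute mult.left_commute)
      finally show ?thesis using d a submoduleD[OF P] by simp
    qed
    then show ?case using a d by (intro exI[of _ "a * d"]) auto
  qed
  then show ?thesis by blast
qed

lemma coefficient_ideal:
  assumes S: "submodule S" and Q: "submodule Q" and g: "g \<in> A"
  shows "is_ideal {b. \<exists>x\<in>S. \<exists>q\<in>Q. sm d x = add q (sm b g)}"
  unfolding is_ideal_def
proof (intro conjI ballI allI)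
  have QA: "Q \<subseteq> A" and SA: "S \<subseteq> A" using Q S submodule_subset by blast+
  have "sm d zr = add zr (sm 0 g)" using g sm_zr sm_zero zr_closed zr_add by simp
  then show "0 \<in> {b. \<exists>x\<in>S. \<exists>q\<in>Q. sm d x = add q (sm b g)}"
    using submodule_zr[OF S] submodule_zr[OF Q] by blast
  fix b assume "b \<in> {b. \<exists>x\<in>S. \<exists>q\<in>Q. sm d x = add q (sm b g)}"
  then obtain x q where xq: "x \<in> S" "q \<in> Q" "sm d x = add q (sm b g)" by blast
  have A: "x \<in> A" "q \<in> A" using xq QA SA by blast+
  {
    fix b' assume "b' \<in> {b. \<exists>x\<in>S. \<exists>q\<in>Q. sm d x = add q (sm b g)}"
    then obtain x' q' where xq': "x' \<in> S" "q' \<in> Q" "sm d x' = add q' (sm b' g)" by blast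
    have A': "x' \<in> A" "q' \<in> A" using xq' QA SA by blast+
    have "sm d (add x x') = add (add q q') (sm (b + b') g)"
      using xq xq' A A' g sm_distr sm_distl add_add_swap sm_closed by simp
    then show "b + b' \<in> {b. \<exists>x\<in>S. \<exists>q\<in>Q. sm d x = add q (sm b g)}"
      using xq xq' submodule_add[OF S] submodule_add[OF Q] by blast
  }
  fix r
  have "sm d (sm r x) = sm r (sm d x)" using A sm_commute by blast
  also have "\<dots> = add (sm r q) (sm (r * b) g)" using xq A g sm_distr sm_sm sm_closed by simp
  finally show "r * b \<in> {b. \<exists>x\<in>S. \<exists>q\<in>Q. sm d x = add q (sm b g)}"
    using xq submodule_sm[OF S] submodule_sm[OF Q] by blast
qed

lemma mem_adjoin_of_coefficient_multiple:
  assumes Q: "submodule Q" and pQ: "pure Q" and g: "g \<in> A" and d: "d \<noteq> 0"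
    and f: "f \<in> A" "qf \<in> Q" "sm d f = add qf (sm \<beta> g)"
    and x: "x \<in> A" "q \<in> Q" "sm d x = add q (sm (r * \<beta>) g)"
  shows "x \<in> adjoin Q f"
proof -
  have qA: "q \<in> A" and qfA: "qf \<in> A" using x f submodule_subset[OF Q] by blast+
  define y where "y = add x (sm (-r) f)"
  have yA: "y \<in> A" unfolding y_def using x f add_closed sm_closed by blast
  have "sm d y = add (sm d x) (sm d (sm (-r) f))"
    unfolding y_def using x f sm_closed sm_distr by simp
  also have "sm d (sm (-r) f) = sm (-r) (sm d f)" using f sm_commute by blast
  also have "sm (-r) (sm d f) = add (sm (-r) qf) (sm (-r * \<beta>) g)"
    using f qfA g sm_distr sm_closed sm_sm by simp
  also have "sm d x = add q (sm (r * \<beta>) g)" by (rule x(3))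
  also have "add (add q (sm (r * \<beta>) g)) (add (sm (-r) qf) (sm (-r * \<beta>) g))
      = add (add q (sm (-r) qf)) (add (sm (r * \<beta>) g) (sm (-r * \<beta>) g))"
    using add_add_swap qA sm_closed qfA g by simp
  also have "add (sm (r * \<beta>) g) (sm (-r * \<beta>) g) = zr"
    using sm_distl[OF g, symmetric] sm_zero g by simp
  finally have "sm d y \<in> Q"
    using add_zr add_closed qA sm_closed qfA x f submoduleD[OF Q] by simp
  then have yQ: "y \<in> Q" using pQ d yA unfolding pure_def by blast
  have "add y (sm r f) = add x (add (sm (-r) f) (sm r f))"
    unfolding y_def using add_assoc x f sm_closed by simp
  also have "add (sm (-r) f) (sm r f) = zr" using sm_distl[OF f(1), symmetric] sm_zero f by simp
  finally have "x = add y (sm r f)" using add_zr x by simp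
  then show ?thesis using yQ unfolding adjoin_def by blast
qed

text \<open>\<open>f\<close> is chosen so that the coefficient of \<open>g\<close> in \<open>d f\<close> generates the ideal of all such
  coefficients.\<close>

lemma pure_closure_adjoin_cyclic:
  assumes pid: "principal_ideal_domain TYPE('k)"
    and Q: "submodule Q" and pQ: "pure Q" and g: "g \<in> A" and gQ: "g \<notin> Q"
    and d: "d \<noteq> 0" and bounded: "\<forall>x\<in>pure_closure (adjoin Q g). sm d x \<in> adjoin Q g"
  shows "\<exists>f\<in>A. f \<notin> Q \<and> pure_closure (adjoin Q g) = adjoin Q f"
proof -
  let ?Q' = "pure_closure (adjoin Q g)"
  note Q' = pure_closure_adjoin[OF Q g]
  have Q'A: "?Q' \<subseteq> A" using submodule_subset[OF Q'(1)] .
  define J where "J = {b. \<exists>x\<in>?Q'. \<exists>q\<in>Q. sm d x = add q (sm b g)}"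
  obtain \<beta> where beta: "J = {r * \<beta> | r. True}"
    using coefficient_ideal[OF Q'(1) Q g] pid unfolding J_def principal_ideal_domain_def by blast
  have "\<beta> \<in> J" using beta by (auto intro!: exI[of _ 1])
  then obtain f qf where f: "f \<in> ?Q'" "qf \<in> Q" "sm d f = add qf (sm \<beta> g)"
    unfolding J_def by blast
  have fA: "f \<in> A" using f Q'A by blast
  have "sm d g = add zr (sm d g)" using zr_add sm_closed g by simp
  then have "d \<in> J" unfolding J_def using Q'(3) submodule_zr[OF Q] by blast
  then have beta0: "\<beta> \<noteq> 0" using beta d by auto
  have fQ: "f \<notin> Q"
  proof
    assume "f \<in> Q"
    then have "sm \<beta> g \<in> Q"
      using f submodule_sm[OF Q] submodule_cancel[OF Q _ sm_closed[OF g]] by metis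
    then show False using pQ g gQ beta0 unfolding pure_def by blast
  qed
  have "x \<in> adjoin Q f" if x: "x \<in> ?Q'" for x
  proof -
    obtain q b where qb: "q \<in> Q" "sm d x = add q (sm b g)"
      using bounded x unfolding adjoin_def by blast
    moreover have "b \<in> J" unfolding J_def using qb x by blast
    then obtain r where "b = r * \<beta>" using beta by blast
    ultimately show ?thesis
      using mem_adjoin_of_coefficient_multiple[OF Q pQ g d fA f(2,3)] x Q'A by blast
  qed
  moreover have "adjoin Q f \<subseteq> ?Q'"
    using Q' f(1) submoduleD[OF Q'(1)] unfolding adjoin_def by blast
  ultimately show ?thesis using fA fQ by blast
qed

lemma adjoin_last_generates:
  assumes Q: "submodule Q" and f: "f \<in> A"
    and gen: "generates_mod (adjoin Q f) e n"
  shows "generates_mod Q (e(n := f)) (Suc n)"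
proof -
  have eA: "\<forall>i<n. e i \<in> A" using gen unfolding generates_mod_def by blast
  have "\<exists>q\<in>Q. \<exists>c'. x = add q (comb c' (e(n := f)) (Suc n))" if "x \<in> A" for x
  proof -
    obtain q' c where q': "q' \<in> adjoin Q f" "x = add q' (comb c e n)"
      using gen \<open>x \<in> A\<close> unfolding generates_mod_def by blast
    then obtain q r where q: "q \<in> Q" "q' = add q (sm r f)" unfolding adjoin_def by blast
    have qA: "q \<in> A" using q submodule_subset[OF Q] by blast
    have "comb (c(n := r)) (e(n := f)) n = comb c e n" by (intro comb_cong) auto
    then have "comb (c(n := r)) (e(n := f)) (Suc n) = add (comb c e n) (sm r f)" by simp
    then have "x = add q (comb (c(n := r)) (e(n := f)) (Suc n))"
      using q' q add_assoc add_comm qA f sm_closed comb_closed[OF eA] by metis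
    then show ?thesis using q by blast
  qed
  moreover have "\<forall>i<Suc n. (e(n := f)) i \<in> A" using eA f by simp
  ultimately show ?thesis unfolding generates_mod_def by blast
qed

lemma adjoin_last_independent:
  assumes Q: "submodule Q" and pQ: "pure Q" and f: "f \<in> A" "f \<notin> Q"
    and eA: "\<forall>i<n. e i \<in> A" and ind: "independent_mod (adjoin Q f) e n"
  shows "independent_mod Q (e(n := f)) (Suc n)"
  unfolding independent_mod_def
proof (rule allI, rule impI)
  fix c assume c: "comb c (e(n := f)) (Suc n) \<in> Q"
  have "comb c (e(n := f)) n = comb c e n" by (intro comb_cong) auto
  then have cQ: "add (comb c e n) (sm (c n) f) \<in> Q" using c by simp
  have "add (comb c e n) (sm (c n) f) = add (sm (c n) f) (comb c e n)"
    using add_comm comb_closed[OF eA] sm_closed f by blast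
  then have "add (sm (c n) f) (comb c e n) \<in> adjoin Q f"
    using cQ subset_adjoin[OF Q f(1)] by auto
  moreover have "sm (c n) f \<in> adjoin Q f"
    using mem_adjoin[OF Q f(1)] adjoin_submodule[OF Q f(1)] submodule_sm by blast
  ultimately have "comb c e n \<in> adjoin Q f"
    using submodule_cancel[OF adjoin_submodule[OF Q f(1)]] comb_closed[OF eA] by blast
  then have ce: "\<forall>i<n. c i = 0" using ind unfolding independent_mod_def by blast
  then have "sm (c n) f \<in> Q"
    using cQ comb_zero_coeffs[OF ce eA] zr_add sm_closed f by simp
  then have "c n = 0" using pQ f unfolding pure_def by blast
  then show "\<forall>i<Suc n. c i = 0" using ce less_Suc_eq by auto
qed

text \<open>Relative form of the freeness of finitely generated torsion-free modules over a PID.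
  Induction on the number of generators: the last one is absorbed into the pure closure of
  \<open>Q + K g\<close>, which over a PID is again of the form \<open>Q + K f\<close>.\<close>

theorem basis_modulo_pure_submodule:
  assumes pid: "principal_ideal_domain TYPE('k)"
  shows "submodule Q \<Longrightarrow> pure Q \<Longrightarrow> generates_mod Q g m
    \<Longrightarrow> \<exists>n e. generates_mod Q e n \<and> independent_mod Q e n"
proof (induction m arbitrary: Q)
  case 0
  then show ?case unfolding independent_mod_def by blast
next
  case (Suc m)
  note Q = Suc.prems(1) and pQ = Suc.prems(2) and gen = Suc.prems(3)
  have gm: "g m \<in> A" using gen unfolding generates_mod_def by simp
  show ?case
  proof (cases "g m \<in> Q")
    case True
    then show ?thesis using Suc.IH[OF Q pQ] generates_mod_drop_last[OF Q _ True gen] by blast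
  next
    case False
    define Q' where "Q' = pure_closure (adjoin Q (g m))"
    have sQ': "submodule Q'" and QQ': "Q \<subseteq> Q'" and "g m \<in> Q'"
      using pure_closure_adjoin[OF Q gm] unfolding Q'_def by blast+
    then obtain n e where ne: "generates_mod Q' e n" "independent_mod Q' e n"
      using Suc.IH[OF sQ' _ generates_mod_drop_last[OF sQ' QQ' _ gen]] pure_pure_closure
      unfolding Q'_def by blast
    obtain w where w: "\<forall>i<Suc m. w i \<in> Q'" "\<forall>x\<in>Q'. \<exists>q\<in>Q. \<exists>c. x = add q (comb c w (Suc m))"
      using generates_mod_larger_submodule[OF Q sQ' QQ' gen ne] by blast
    obtain d where d: "d \<noteq> 0" "\<forall>c. sm d (comb c w (Suc m)) \<in> adjoin Q (g m)"
      using comb_multiplier[OF adjoin_submodule[OF Q gm]] w(1) unfolding Q'_def by blast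
    have wA: "\<forall>i<Suc m. w i \<in> A" using w(1) submodule_subset[OF sQ'] by blast
    have "sm d x \<in> adjoin Q (g m)" if "x \<in> Q'" for x
    proof -
      obtain q c where q: "q \<in> Q" and x: "x = add q (comb c w (Suc m))"
        using w(2) \<open>x \<in> Q'\<close> by blast
      have "q \<in> adjoin Q (g m)" "q \<in> A" using q subset_adjoin[OF Q gm] submodule_subset[OF Q] by blast+
      moreover have "sm d x = add (sm d q) (sm d (comb c w (Suc m)))"
        using x \<open>q \<in> A\<close> comb_closed[OF wA] sm_distr by simp
      ultimately show ?thesis using d(2) submoduleD[OF adjoin_submodule[OF Q gm]] by simp
    qed
    then obtain f where f: "f \<in> A" "f \<notin> Q" "Q' = adjoin Q f"
      using pure_closure_adjoin_cyclic[OF pid Q pQ gm False d(1)] unfolding Q'_def by blast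
    have "\<forall>i<n. e i \<in> A" using ne(1) unfolding generates_mod_def by blast
    then show ?thesis
      using adjoin_last_generates[OF Q f(1)] adjoin_last_independent[OF Q pQ f(1,2)] ne f(3)
      by blast
  qed
qed

end

section \<open>Torsion-free \<open>K\<close>-groups of class two\<close>

locale torsion_free_K_group2 =
  fixes G :: "('g, 'm) monoid_scheme" (structure) and pw :: "'g \<Rightarrow> 'k::idom \<Rightarrow> 'g"
  assumes K_group: "K_group2 G pw" and torsion_free: "K_torsion_free G pw"
begin

sublocale group G
  using K_group unfolding K_group2_def nilpotent2_def by blast

lemma gcomm_central: "x \<in> carrier G \<Longrightarrow> y \<in> carrier G \<Longrightarrow> z \<in> carrier G \<Longrightarrow>
    gcomm G x y \<otimes> z = z \<otimes> gcomm G x y"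
  using K_group unfolding K_group2_def nilpotent2_def by blast

lemma pw_closed [simp]: "x \<in> carrier G \<Longrightarrow> pw x a \<in> carrier G"
  using K_group unfolding K_group2_def by blast

lemma pw_one [simp]: "x \<in> carrier G \<Longrightarrow> pw x 1 = x"
  using K_group unfolding K_group2_def by blast

lemma pw_add: "x \<in> carrier G \<Longrightarrow> pw x a \<otimes> pw x b = pw x (a + b)"
  using K_group unfolding K_group2_def by blast

lemma pw_pw: "x \<in> carrier G \<Longrightarrow> pw (pw x a) b = pw x (a * b)"
  using K_group unfolding K_group2_def by blast

lemma pw_conj: "x \<in> carrier G \<Longrightarrow> h \<in> carrier G \<Longrightarrow>
    inv h \<otimes> pw x a \<otimes> h = pw (inv h \<otimes> x \<otimes> h) a"
  using K_group unfolding K_group2_def by blast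

lemma pw_mult_gcomm: "x \<in> carrier G \<Longrightarrow> y \<in> carrier G \<Longrightarrow>
    pw x a \<otimes> pw y a = pw (x \<otimes> y) a \<otimes> pw (gcomm G x y) (kbinom a 2)"
  using K_group unfolding K_group2_def by blast

lemma gcomm_closed [simp]: "x \<in> carrier G \<Longrightarrow> y \<in> carrier G \<Longrightarrow> gcomm G x y \<in> carrier G"
  unfolding gcomm_def by simp

lemma pw_zero [simp]:
  assumes x: "x \<in> carrier G"
  shows "pw x 0 = \<one>"
proof -
  have "pw x 0 \<otimes> pw x 0 = pw x 0" using pw_add[OF x, of 0 0] by simp
  then show ?thesis using x by simp
qed

lemma pw_one_elem [simp]: "pw \<one> a = \<one>"
proof -
  have "pw (pw \<one> 0) a = pw \<one> 0" using pw_pw[of \<one> 0 a] by simp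
  then show ?thesis by simp
qed

lemma pw_minus_one:
  assumes x: "x \<in> carrier G"
  shows "pw x (-1) = inv x"
proof -
  have "pw x (-1) \<otimes> x = \<one>" using pw_add[OF x, of "-1" 1] x by simp
  then show ?thesis using x by (simp add: inv_equality)
qed

lemma gcomm_eq_one:
  assumes x: "x \<in> carrier G" and y: "y \<in> carrier G" and xy: "x \<otimes> y = y \<otimes> x"
  shows "gcomm G x y = \<one>"
proof -
  have "gcomm G x y = inv x \<otimes> (inv y \<otimes> (y \<otimes> x))"
    unfolding gcomm_def using x y xy by (simp add: m_assoc)
  also have "inv y \<otimes> (y \<otimes> x) = x" using x y by (simp add: m_assoc[symmetric])
  finally show ?thesis using x by simp
qed

lemma pw_mult_commute:
  assumes x: "x \<in> carrier G" and y: "y \<in> carrier G" and xy: "x \<otimes> y = y \<otimes> x"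
  shows "pw (x \<otimes> y) a = pw x a \<otimes> pw y a"
  using pw_mult_gcomm[OF x y, of a] gcomm_eq_one[OF x y xy] x y by simp

lemma gcomm_eq: "x \<in> carrier G \<Longrightarrow> y \<in> carrier G \<Longrightarrow> gcomm G x y = inv (y \<otimes> x) \<otimes> (x \<otimes> y)"
  unfolding gcomm_def by (simp add: inv_mult_group m_assoc)

lemma mult_gcomm: "x \<in> carrier G \<Longrightarrow> y \<in> carrier G \<Longrightarrow> y \<otimes> x \<otimes> gcomm G x y = x \<otimes> y"
  using gcomm_eq by (simp add: m_assoc[symmetric])

lemma conj_eq_mult_gcomm:
  assumes c: "c \<in> carrier G" and h: "h \<in> carrier G"
  shows "inv h \<otimes> c \<otimes> h = c \<otimes> gcomm G c h"
proof -
  have "c \<otimes> gcomm G c h = c \<otimes> (inv c \<otimes> (inv h \<otimes> c \<otimes> h))"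
    unfolding gcomm_def using c h by (simp add: m_assoc)
  also have "\<dots> = inv h \<otimes> c \<otimes> h" using c h by (simp add: m_assoc[symmetric])
  finally show ?thesis by simp
qed

lemma conj_fixed_iff_commute:
  assumes a: "a \<in> carrier G" and h: "h \<in> carrier G"
  shows "inv h \<otimes> a \<otimes> h = a \<longleftrightarrow> a \<otimes> h = h \<otimes> a"
proof
  assume "inv h \<otimes> a \<otimes> h = a"
  then have "h \<otimes> (inv h \<otimes> a \<otimes> h) = h \<otimes> a" by simp
  then show "a \<otimes> h = h \<otimes> a" using a h by (simp add: m_assoc[symmetric])
next
  assume "a \<otimes> h = h \<otimes> a"
  then have "inv h \<otimes> (a \<otimes> h) = inv h \<otimes> (h \<otimes> a)" by simp
  then show "inv h \<otimes> a \<otimes> h = a" using a h by (simp add: m_assoc[symmetric])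
qed

lemma K_subgroupI:
  assumes sub: "S \<subseteq> carrier G" and one: "\<one> \<in> S"
    and mult: "\<And>x y. x \<in> S \<Longrightarrow> y \<in> S \<Longrightarrow> x \<otimes> y \<in> S"
    and pow: "\<And>x a. x \<in> S \<Longrightarrow> pw x a \<in> S"
  shows "K_subgroup G pw S"
proof -
  have "inv x \<in> S" if "x \<in> S" for x
    using pow[OF that, of "-1"] pw_minus_one that sub by auto
  then have "subgroup S G" using sub one mult by (intro subgroupI) auto
  then show ?thesis unfolding K_subgroup_def using pow by blast
qed

lemma K_subgroupD:
  assumes "K_subgroup G pw S"
  shows "S \<subseteq> carrier G" "\<one> \<in> S" "x \<in> S \<Longrightarrow> y \<in> S \<Longrightarrow> x \<otimes> y \<in> S" "x \<in> S \<Longrightarrow> pw x a \<in> S"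
  using assms unfolding K_subgroup_def
  by (auto intro: subgroup.m_closed subgroup.one_closed dest: subgroup.mem_carrier)

lemma K_gen_K_subgroup:
  assumes "S \<subseteq> carrier G"
  shows "K_subgroup G pw (K_gen G pw S)"
proof -
  let ?F = "{H. K_subgroup G pw H \<and> S \<subseteq> H}"
  have "carrier G \<in> ?F" using assms subgroup_self unfolding K_subgroup_def by auto
  then have "subgroup (\<Inter>?F) G" by (intro subgroups_Inter) (auto simp: K_subgroup_def)
  then show ?thesis unfolding K_gen_def K_subgroup_def by auto
qed

lemma K_gen_least: "K_subgroup G pw H \<Longrightarrow> S \<subseteq> H \<Longrightarrow> K_gen G pw S \<subseteq> H"
  unfolding K_gen_def by blast

lemma subset_K_gen: "S \<subseteq> K_gen G pw S"
  unfolding K_gen_def by blast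

abbreviation ZG :: "'g set" where "ZG \<equiv> center_of G (carrier G)"

lemma center_commute: "x \<in> ZG \<Longrightarrow> y \<in> carrier G \<Longrightarrow> x \<otimes> y = y \<otimes> x"
  unfolding center_of_def by blast

lemma center_subset: "ZG \<subseteq> carrier G"
  unfolding center_of_def by blast

lemma center_K_subgroup: "K_subgroup G pw ZG"
proof (rule K_subgroupI[OF center_subset])
  show "\<one> \<in> ZG" unfolding center_of_def by simp
  fix x assume x: "x \<in> ZG"
  then have xc: "x \<in> carrier G" using center_subset by blast
  {
    fix y assume y: "y \<in> ZG"
    then have yc: "y \<in> carrier G" using center_subset by blast
    have "x \<otimes> y \<otimes> h = h \<otimes> (x \<otimes> y)" if h: "h \<in> carrier G" for h
    proof -
      have "x \<otimes> y \<otimes> h = (x \<otimes> h) \<otimes> y" using xc yc h center_commute[OF y h] by (simp add: m_assoc)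
      also have "\<dots> = h \<otimes> (x \<otimes> y)" using xc yc h center_commute[OF x h] by (simp add: m_assoc)
      finally show ?thesis .
    qed
    then show "x \<otimes> y \<in> ZG" using xc yc unfolding center_of_def by blast
  }
  fix a
  have "pw x a \<otimes> h = h \<otimes> pw x a" if h: "h \<in> carrier G" for h
  proof -
    have "inv h \<otimes> x \<otimes> h = x" using conj_fixed_iff_commute[OF xc h] center_commute[OF x h] by blast
    then have "inv h \<otimes> pw x a \<otimes> h = pw x a" using pw_conj[OF xc h] by simp
    then show ?thesis using conj_fixed_iff_commute[OF _ h] xc by simp
  qed
  then show "pw x a \<in> ZG" using xc unfolding center_of_def by simp
qed

lemma central_subgroup_normal:
  assumes H: "subgroup H G" and HZ: "H \<subseteq> ZG"
  shows "H \<lhd> G"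
proof (rule normal_invI[OF H])
  fix x h assume x: "x \<in> carrier G" and h: "h \<in> H"
  have hc: "h \<in> carrier G" using subgroup.mem_carrier[OF H h] .
  have "h \<otimes> x = x \<otimes> h" using center_commute HZ h x by blast
  then have "x \<otimes> h \<otimes> inv x = h \<otimes> x \<otimes> inv x" by simp
  also have "\<dots> = h" using x hc by (simp add: m_assoc)
  finally show "x \<otimes> h \<otimes> inv x \<in> H" using h by simp
qed

text \<open>Torsion-freeness makes the centre isolated: if \<open>c\<^sup>b\<close> is central, conjugating it by \<open>h\<close>
  multiplies it by \<open>[c,h]\<^sup>b\<close>, so \<open>[c,h]\<^sup>b = 1\<close> and hence \<open>[c,h] = 1\<close>.\<close>

lemma center_isolated:
  assumes c: "c \<in> carrier G" and b: "b \<noteq> 0" and cb: "pw c b \<in> ZG"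
  shows "c \<in> ZG"
  unfolding center_of_def
proof (intro CollectI conjI ballI)
  show "c \<in> carrier G" using c .
  fix h assume h: "h \<in> carrier G"
  have "inv h \<otimes> pw c b \<otimes> h = pw c b"
    using conj_fixed_iff_commute[OF pw_closed[OF c] h] center_commute[OF cb h] by blast
  then have "pw c b = pw (inv h \<otimes> c \<otimes> h) b" using pw_conj c h by simp
  also have "inv h \<otimes> c \<otimes> h = c \<otimes> gcomm G c h" by (rule conj_eq_mult_gcomm[OF c h])
  also have "pw (c \<otimes> gcomm G c h) b = pw c b \<otimes> pw (gcomm G c h) b"
    using pw_mult_commute[OF c gcomm_closed[OF c h]] gcomm_central[OF c h c] by simp
  finally have "pw (gcomm G c h) b = \<one>" using c h by simp
  then have "gcomm G c h = \<one>" using torsion_free b c h unfolding K_torsion_free_def by simp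
  then have "inv h \<otimes> c \<otimes> h = c" using conj_eq_mult_gcomm c h by simp
  then show "c \<otimes> h = h \<otimes> c" using conj_fixed_iff_commute[OF c h] by blast
qed

sublocale Zmod: kmodule ZG "mult G" \<one> "\<lambda>a x. pw x a"
proof
  note Z = K_subgroupD[OF center_K_subgroup]
  fix x y z a b assume x: "x \<in> ZG"
  have xc: "x \<in> carrier G" using x center_subset by blast
  show "pw x a \<in> ZG" using Z x by blast
  show "\<one> \<otimes> x = x" using xc by simp
  show "pw x (a + b) = pw x a \<otimes> pw x b" using pw_add xc by simp
  show "pw (pw x b) a = pw x (a * b)" using pw_pw xc by (simp add: mult.commute)
  show "pw x 1 = x" "pw x 0 = \<one>" using xc by simp_all
  assume y: "y \<in> ZG"
  have yc: "y \<in> carrier G" using y center_subset by blast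
  show "x \<otimes> y \<in> ZG" using Z x y by blast
  show "x \<otimes> y = y \<otimes> x" using center_commute x yc by blast
  show "pw (x \<otimes> y) a = pw x a \<otimes> pw y a" using pw_mult_commute xc yc center_commute x by blast
  assume z: "z \<in> ZG"
  show "x \<otimes> y \<otimes> z = x \<otimes> (y \<otimes> z)" using xc yc z center_subset m_assoc by blast
qed (rule K_subgroupD(2)[OF center_K_subgroup])

lemma K_subgroup_center_submodule: "Zmod.submodule S \<Longrightarrow> K_subgroup G pw S"
  using center_subset unfolding Zmod.submodule_def by (intro K_subgroupI) auto

abbreviation DG :: "'g set" where "DG \<equiv> derived G pw (carrier G)"

lemma derived_K_subgroup: "K_subgroup G pw DG"
  unfolding derived_def by (rule K_gen_K_subgroup) auto

lemma gcomm_in_derived: "x \<in> carrier G \<Longrightarrow> y \<in> carrier G \<Longrightarrow> gcomm G x y \<in> DG"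
  unfolding derived_def by (rule subsetD[OF subset_K_gen]) blast

lemma derived_subset_center: "DG \<subseteq> ZG"
  unfolding derived_def
  by (rule K_gen_least[OF center_K_subgroup]) (auto simp: center_of_def gcomm_central)

abbreviation IG :: "'g set" where "IG \<equiv> isolator G pw (carrier G) DG"

lemma isolator_subset_center: "IG \<subseteq> ZG"
  unfolding isolator_def using center_isolated derived_subset_center by blast

lemma I_of_eq_isolator: "I_of G pw = IG"
  unfolding I_of_def using isolator_subset_center by blast

lemma isolator_K_subgroup: "K_subgroup G pw IG"
proof (rule K_subgroupI)
  note D = K_subgroupD[OF derived_K_subgroup]
  show "IG \<subseteq> carrier G" unfolding isolator_def by blast
  show "\<one> \<in> IG" unfolding isolator_def using D(2) by (auto intro!: exI[of _ 1])
  fix x assume "x \<in> IG"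
  then obtain a where x: "x \<in> carrier G" "a \<noteq> 0" "pw x a \<in> DG" unfolding isolator_def by blast
  have xZ: "x \<in> ZG" using \<open>x \<in> IG\<close> isolator_subset_center by blast
  {
    fix y assume "y \<in> IG"
    then obtain b where y: "y \<in> carrier G" "b \<noteq> 0" "pw y b \<in> DG" unfolding isolator_def by blast
    have "pw (x \<otimes> y) (a * b) = pw x (a * b) \<otimes> pw y (a * b)"
      using pw_mult_commute x y center_commute[OF xZ] by blast
    also have "\<dots> = pw (pw x a) b \<otimes> pw (pw y b) a" using pw_pw x y by (simp add: mult.commute)
    finally have "pw (x \<otimes> y) (a * b) \<in> DG" using D x y by simp
    then show "x \<otimes> y \<in> IG" unfolding isolator_def using x y by (auto intro!: exI[of _ "a * b"])
  }
  fix c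
  have "pw (pw x c) a = pw (pw x a) c" using pw_pw x by (simp add: mult.commute)
  then have "pw (pw x c) a \<in> DG" using D x by simp
  then show "pw x c \<in> IG" unfolding isolator_def using x by auto
qed

lemma isolator_subgroup: "subgroup IG G"
  using isolator_K_subgroup unfolding K_subgroup_def by blast

lemma isolator_normal: "IG \<lhd> G"
  using central_subgroup_normal isolator_subgroup isolator_subset_center by blast

lemma isolator_isolated:
  assumes x: "x \<in> carrier G" and a: "a \<noteq> 0" and xa: "pw x a \<in> IG"
  shows "x \<in> IG"
proof -
  obtain b where "b \<noteq> 0" "pw (pw x a) b \<in> DG" using xa unfolding isolator_def by blast
  then have "a * b \<noteq> 0" "pw x (a * b) \<in> DG" using x a pw_pw by auto
  then show ?thesis unfolding isolator_def using x by blast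
qed

lemma gcomm_in_isolator: "x \<in> carrier G \<Longrightarrow> y \<in> carrier G \<Longrightarrow> gcomm G x y \<in> IG"
  unfolding isolator_def using gcomm_in_derived by (auto intro!: exI[of _ 1])

section \<open>The \<open>K\<close>-module \<open>G/I(G)\<close>\<close>

lemma coset_eq_iff:
  assumes x: "x \<in> carrier G" and y: "y \<in> carrier G"
  shows "IG #> x = IG #> y \<longleftrightarrow> (\<exists>n\<in>IG. y = n \<otimes> x)"
proof
  assume "IG #> x = IG #> y"
  then have "y \<in> IG #> x" using rcos_self[OF y isolator_subgroup] by simp
  then show "\<exists>n\<in>IG. y = n \<otimes> x" unfolding r_coset_def by blast
next
  assume "\<exists>n\<in>IG. y = n \<otimes> x"
  then have "y \<in> IG #> x" unfolding r_coset_def by blast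
  then show "IG #> x = IG #> y" using repr_independence[OF _ x isolator_subgroup] by blast
qed

lemma coset_eq_isolator_iff: "x \<in> carrier G \<Longrightarrow> IG #> x = IG \<longleftrightarrow> x \<in> IG"
  using rcos_self[OF _ isolator_subgroup] coset_join2[OF _ isolator_subgroup] by blast

lemma coset_one: "IG #> \<one> = IG"
  using coset_mult_one isolator_subgroup subgroup.subset by blast

lemma coset_mult: "x \<in> carrier G \<Longrightarrow> y \<in> carrier G \<Longrightarrow> (IG #> x) <#> (IG #> y) = IG #> (x \<otimes> y)"
  using normal.rcos_sum[OF isolator_normal] by blast

lemma rcosets_isolator_iff: "C \<in> rcosets IG \<longleftrightarrow> (\<exists>x\<in>carrier G. C = IG #> x)"
  unfolding RCOSETS_def by blast

text \<open>The \<open>K\<close>-action on \<open>G/I(G)\<close>, computed on an arbitrary representative; it does not depend on the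
  choice because \<open>I(G)\<close> is central and powers of commuting elements multiply.\<close>

definition coset_pow :: "'k \<Rightarrow> 'g set \<Rightarrow> 'g set" where
  "coset_pow a C = IG #> pw (SOME x. x \<in> carrier G \<and> C = IG #> x) a"

lemma coset_pow_eq:
  assumes x: "x \<in> carrier G"
  shows "coset_pow a (IG #> x) = IG #> pw x a"
proof -
  let ?y = "SOME y. y \<in> carrier G \<and> IG #> x = IG #> y"
  have "\<exists>y. y \<in> carrier G \<and> IG #> x = IG #> y" using x by blast
  then have "?y \<in> carrier G \<and> IG #> x = IG #> ?y" by (rule someI_ex)
  then obtain n where n: "?y \<in> carrier G" "n \<in> IG" "?y = n \<otimes> x" using coset_eq_iff x by blast
  have nc: "n \<in> carrier G" using n isolator_subset_center center_subset by blast
  have "n \<otimes> x = x \<otimes> n" using center_commute n(2) isolator_subset_center x by blast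
  then have "pw ?y a = pw n a \<otimes> pw x a" using n(3) pw_mult_commute[OF nc x] by simp
  moreover have "pw n a \<in> IG" using K_subgroupD(4)[OF isolator_K_subgroup n(2)] .
  ultimately have "IG #> pw x a = IG #> pw ?y a"
    using x n(1) nc by (intro coset_eq_iff[THEN iffD2]) auto
  then show ?thesis unfolding coset_pow_def by simp
qed

lemma coset_mult_commute:
  assumes x: "x \<in> carrier G" and y: "y \<in> carrier G"
  shows "IG #> (y \<otimes> x) = IG #> (x \<otimes> y)"
proof -
  have "(y \<otimes> x) \<otimes> gcomm G x y = x \<otimes> y" using mult_gcomm x y .
  then have "x \<otimes> y = gcomm G x y \<otimes> (y \<otimes> x)" using gcomm_central[OF x y, of "y \<otimes> x"] x y by simp
  then show ?thesis using coset_eq_iff gcomm_in_isolator x y by auto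
qed

lemma coset_pw_mult:
  assumes x: "x \<in> carrier G" and y: "y \<in> carrier G"
  shows "IG #> pw (x \<otimes> y) a = IG #> (pw x a \<otimes> pw y a)"
proof -
  let ?c = "pw (gcomm G x y) (kbinom a 2)"
  have c: "?c \<in> IG" using K_subgroupD(4)[OF isolator_K_subgroup gcomm_in_isolator[OF x y]] .
  have "pw x a \<otimes> pw y a = ?c \<otimes> pw (x \<otimes> y) a"
    using pw_mult_gcomm[OF x y] center_commute c isolator_subset_center x y by auto
  then show ?thesis using coset_eq_iff c x y by auto
qed

sublocale Qmod: kmodule "rcosets IG" "set_mult G" IG coset_pow
proof
  fix C D E a b assume "C \<in> rcosets IG"
  then obtain x where x: "x \<in> carrier G" "C = IG #> x" using rcosets_isolator_iff by blast
  show "coset_pow a C \<in> rcosets IG" using x coset_pow_eq rcosets_isolator_iff by auto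
  show "IG <#> C = C" using x coset_mult[of \<one> x] coset_one by simp
  show "coset_pow (a + b) C = coset_pow a C <#> coset_pow b C" using x coset_pow_eq coset_mult pw_add by simp
  show "coset_pow a (coset_pow b C) = coset_pow (a * b) C" using x coset_pow_eq pw_pw by (simp add: mult.commute)
  show "coset_pow 1 C = C" "coset_pow 0 C = IG" using x coset_pow_eq coset_one by simp_all
  assume "D \<in> rcosets IG"
  then obtain y where y: "y \<in> carrier G" "D = IG #> y" using rcosets_isolator_iff by blast
  show "C <#> D \<in> rcosets IG" using x y coset_mult rcosets_isolator_iff by auto
  show "C <#> D = D <#> C" using x y coset_mult coset_mult_commute by simp
  show "coset_pow a (C <#> D) = coset_pow a C <#> coset_pow a D"
    using x y coset_mult coset_pow_eq coset_pw_mult by simp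
  assume "E \<in> rcosets IG"
  then obtain z where z: "z \<in> carrier G" "E = IG #> z" using rcosets_isolator_iff by blast
  show "C <#> D <#> E = C <#> (D <#> E)" using x y z coset_mult by (simp add: m_assoc)
next
  have "IG #> \<one> \<in> rcosets IG" using rcosets_isolator_iff by blast
  then show "IG \<in> rcosets IG" using coset_one by simp
qed

lemma coset_comb:
  "\<forall>i<k. z i \<in> ZG \<Longrightarrow> IG #> Zmod.comb c z k = Qmod.comb c (\<lambda>i. IG #> z i) k"
proof (induction k)
  case 0
  then show ?case using coset_one by simp
next
  case (Suc k)
  have "z k \<in> carrier G" "Zmod.comb c z k \<in> carrier G"
    using Suc.prems Zmod.comb_closed center_subset by auto
  then have "IG #> Zmod.comb c z (Suc k) = (IG #> Zmod.comb c z k) <#> (IG #> pw (z k) (c k))"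
    using coset_mult by simp
  then show ?case using Suc \<open>z k \<in> carrier G\<close> coset_pow_eq by simp
qed

lemma K_subgroup_coset_preimage:
  assumes S: "Qmod.submodule S"
  shows "K_subgroup G pw {x \<in> carrier G. IG #> x \<in> S}"
proof (rule K_subgroupI)
  show "\<one> \<in> {x \<in> carrier G. IG #> x \<in> S}" using Qmod.submodule_zr[OF S] coset_one by simp
  fix x assume x: "x \<in> {x \<in> carrier G. IG #> x \<in> S}"
  show "pw x a \<in> {x \<in> carrier G. IG #> x \<in> S}" for a
    using x Qmod.submodule_sm[OF S] coset_pow_eq by fastforce
  fix y assume "y \<in> {x \<in> carrier G. IG #> x \<in> S}"
  then show "x \<otimes> y \<in> {x \<in> carrier G. IG #> x \<in> S}"
    using x Qmod.submodule_add[OF S] coset_mult by fastforce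
qed auto

definition center_cosets :: "'g set set" where
  "center_cosets = (\<lambda>x. IG #> x) ` ZG"

lemma center_cosets_submodule: "Qmod.submodule center_cosets"
  unfolding Qmod.submodule_def center_cosets_def
proof (intro conjI ballI allI)
  note Z = K_subgroupD[OF center_K_subgroup]
  show "(\<lambda>x. IG #> x) ` ZG \<subseteq> rcosets IG" using center_subset rcosets_isolator_iff by auto
  show "IG \<in> (\<lambda>x. IG #> x) ` ZG" using Z(2) coset_one by force
  fix C a assume "C \<in> (\<lambda>x. IG #> x) ` ZG"
  then obtain x where x: "x \<in> ZG" "C = IG #> x" by blast
  then show "coset_pow a C \<in> (\<lambda>x. IG #> x) ` ZG" using Z coset_pow_eq by auto
  fix D assume "D \<in> (\<lambda>x. IG #> x) ` ZG"
  then obtain y where y: "y \<in> ZG" "D = IG #> y" by blast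
  have "C <#> D = IG #> (x \<otimes> y)" using x y coset_mult center_subset by blast
  then show "C <#> D \<in> (\<lambda>x. IG #> x) ` ZG" using Z(3)[OF x(1) y(1)] by blast
qed

lemma center_cosets_pure: "Qmod.pure center_cosets"
  unfolding Qmod.pure_def
proof (intro ballI allI impI)
  fix C a assume C: "C \<in> rcosets IG" and a: "a \<noteq> 0" and Ca: "coset_pow a C \<in> center_cosets"
  obtain x where x: "x \<in> carrier G" "C = IG #> x" using C rcosets_isolator_iff by blast
  obtain z where z: "z \<in> ZG" "IG #> pw x a = IG #> z"
    using Ca x coset_pow_eq unfolding center_cosets_def by auto
  obtain n where n: "n \<in> IG" "z = n \<otimes> pw x a"
    using coset_eq_iff[of "pw x a" z] z center_subset x by auto
  have "pw x a = inv n \<otimes> z"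
    using n isolator_subset_center center_subset x by (auto simp: m_assoc[symmetric])
  then have "pw x a \<in> ZG"
    using n z isolator_subset_center K_subgroupD[OF center_K_subgroup] pw_minus_one
    by (metis (no_types, lifting) subsetD)
  then show "C \<in> center_cosets" using center_isolated x a unfolding center_cosets_def by blast
qed

lemma isolator_coset_submodule: "Qmod.submodule {IG}"
  unfolding Qmod.submodule_def using Qmod.zr_closed Qmod.zr_add Qmod.sm_zr by auto

lemma isolator_coset_pure: "Qmod.pure {IG}"
  unfolding Qmod.pure_def
proof (intro ballI allI impI)
  fix C a assume C: "C \<in> rcosets IG" and a: "a \<noteq> 0" and Ca: "coset_pow a C \<in> {IG}"
  obtain x where x: "x \<in> carrier G" "C = IG #> x" using C rcosets_isolator_iff by blast
  then have "pw x a \<in> IG" using Ca coset_pow_eq coset_eq_isolator_iff by simp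
  then show "C \<in> {IG}" using isolator_isolated x a coset_eq_isolator_iff by simp
qed

lemma cosets_finitely_generated:
  assumes "K_finitely_generated G pw"
  shows "\<exists>m g. Qmod.generates_mod {IG} g m"
proof -
  obtain S where S: "finite S" "S \<subseteq> carrier G" "K_gen G pw S = carrier G"
    using assms unfolding K_finitely_generated_def by blast
  obtain m and g :: "nat \<Rightarrow> 'g" where g: "S = g ` {i. i < m}"
    using finite_imp_nat_seg_image_inj_on[OF S(1)] by blast
  let ?v = "\<lambda>i. IG #> g i"
  have v: "\<forall>i<m. ?v i \<in> rcosets IG" using g S(2) rcosets_isolator_iff by auto
  let ?T = "{x \<in> carrier G. IG #> x \<in> Qmod.span ?v m}"
  have KT: "K_gen G pw S \<subseteq> ?T"
    using K_gen_least[OF K_subgroup_coset_preimage[OF Qmod.span_submodule[OF v]]]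
      Qmod.unit_vector_in_span[OF v] g S(2) by blast
  have "\<exists>c. C = Qmod.comb c ?v m" if C: "C \<in> rcosets IG" for C
  proof -
    obtain x where x: "x \<in> carrier G" "C = IG #> x" using C rcosets_isolator_iff by blast
    then have "IG #> x \<in> Qmod.span ?v m" using KT S(3) by blast
    then show ?thesis using x(2) unfolding Qmod.span_def by blast
  qed
  then have "\<forall>C\<in>rcosets IG. \<exists>q\<in>{IG}. \<exists>c. C = q <#> Qmod.comb c ?v m"
    using Qmod.zr_add Qmod.comb_closed[OF v] by (metis singletonI)
  then have "Qmod.generates_mod {IG} ?v m" using v unfolding Qmod.generates_mod_def by (intro conjI)
  then show ?thesis by blast
qed

lemma center_cosets_finitely_generated:
  assumes g: "Qmod.generates_mod {IG} g m"
    and e: "Qmod.generates_mod center_cosets e n" "Qmod.independent_mod center_cosets e n"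
  shows "\<exists>w. (\<forall>i<m. w i \<in> center_cosets) \<and>
    (\<forall>C\<in>center_cosets. \<exists>q\<in>{IG}. \<exists>c. C = q <#> Qmod.comb c w m)"
proof -
  have "{IG} \<subseteq> center_cosets" using Qmod.submodule_zr[OF center_cosets_submodule] by blast
  then show ?thesis
    using Qmod.generates_mod_larger_submodule[OF isolator_coset_submodule center_cosets_submodule _ g e]
    by blast
qed

lemma center_cosets_basis:
  assumes pid: "principal_ideal_domain TYPE('k)"
    and g: "Qmod.generates_mod {IG} g m"
    and e: "Qmod.generates_mod center_cosets e n" "Qmod.independent_mod center_cosets e n"
  shows "\<exists>k z. (\<forall>i<k. z i \<in> ZG) \<and> (\<forall>x\<in>ZG. \<exists>c. IG #> x = Qmod.comb c (\<lambda>i. IG #> z i) k)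
    \<and> Qmod.independent_mod {IG} (\<lambda>i. IG #> z i) k"
proof -
  interpret Z: kmodule center_cosets "set_mult G" IG coset_pow
    using Qmod.submodule_kmodule[OF center_cosets_submodule] .
  have "Z.submodule {IG}"
    using isolator_coset_submodule Qmod.submodule_zr[OF center_cosets_submodule]
    unfolding Z.submodule_def Qmod.submodule_def by blast
  moreover have "Z.pure {IG}"
    using isolator_coset_pure Qmod.submodule_subset[OF center_cosets_submodule]
    unfolding Z.pure_def Qmod.pure_def by blast
  moreover obtain w where "Z.generates_mod {IG} w m"
    using center_cosets_finitely_generated[OF g e] unfolding Z.generates_mod_def by blast
  ultimately obtain k f where f: "Z.generates_mod {IG} f k" "Z.independent_mod {IG} f k"
    using Z.basis_modulo_pure_submodule[OF pid] by blast
  have "\<forall>i<k. \<exists>z. z \<in> ZG \<and> f i = IG #> z"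
    using f(1) unfolding Z.generates_mod_def by (auto simp: center_cosets_def)
  then obtain z where z: "\<forall>i<k. z i \<in> ZG \<and> f i = IG #> z i" by metis
  have comb_f: "Qmod.comb c f k = Qmod.comb c (\<lambda>i. IG #> z i) k" for c
    using z by (intro Qmod.comb_cong) auto
  have "\<forall>x\<in>ZG. \<exists>c. IG #> x = Qmod.comb c f k"
    using f(1) Z.zr_add Z.comb_closed unfolding Z.generates_mod_def by (auto simp: center_cosets_def)
  then have "\<forall>x\<in>ZG. \<exists>c. IG #> x = Qmod.comb c (\<lambda>i. IG #> z i) k" using comb_f by simp
  moreover have "Qmod.independent_mod {IG} (\<lambda>i. IG #> z i) k"
    using f(2) comb_f unfolding Z.independent_mod_def Qmod.independent_mod_def by simp
  moreover have "\<forall>i<k. z i \<in> ZG" using z by blast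
  ultimately show ?thesis by blast
qed

section \<open>Regularity\<close>

lemma addition_of_lifted_basis:
  assumes z: "\<forall>i<k. z i \<in> ZG"
    and span: "\<forall>x\<in>ZG. \<exists>c. IG #> x = Qmod.comb c (\<lambda>i. IG #> z i) k"
    and indep: "Qmod.independent_mod {IG} (\<lambda>i. IG #> z i) k"
  shows "is_addition G pw (Zmod.span z k)"
  unfolding is_addition_def I_of_eq_isolator
proof (intro conjI)
  have sub: "Zmod.submodule (Zmod.span z k)" using Zmod.span_submodule z by blast
  show K: "K_subgroup G pw (Zmod.span z k)" using K_subgroup_center_submodule[OF sub] .
  show G0Z: "Zmod.span z k \<subseteq> ZG" using Zmod.submodule_subset[OF sub] .
  show "Zmod.span z k \<inter> IG = {\<one>}"
  proof
    show "{\<one>} \<subseteq> Zmod.span z k \<inter> IG"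
      using K_subgroupD(2)[OF K] K_subgroupD(2)[OF isolator_K_subgroup] by blast
    show "Zmod.span z k \<inter> IG \<subseteq> {\<one>}"
    proof
      fix y assume y: "y \<in> Zmod.span z k \<inter> IG"
      then obtain c where c: "y = Zmod.comb c z k" unfolding Zmod.span_def by blast
      have "IG #> y = IG" using y coset_eq_isolator_iff isolator_subset_center center_subset by blast
      then have "\<forall>i<k. c i = 0" using c coset_comb[OF z] indep unfolding Qmod.independent_mod_def by simp
      then show "y \<in> {\<one>}" using c Zmod.comb_zero_coeffs z by simp
    qed
  qed
  show "{a \<otimes> b |a b. a \<in> Zmod.span z k \<and> b \<in> IG} = ZG"
  proof
    show "{a \<otimes> b |a b. a \<in> Zmod.span z k \<and> b \<in> IG} \<subseteq> ZG"
      using G0Z isolator_subset_center K_subgroupD(3)[OF center_K_subgroup] by blast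
    show "ZG \<subseteq> {a \<otimes> b |a b. a \<in> Zmod.span z k \<and> b \<in> IG}"
    proof
      fix x assume x: "x \<in> ZG"
      then obtain c where "IG #> x = Qmod.comb c (\<lambda>i. IG #> z i) k" using span by blast
      then have "IG #> Zmod.comb c z k = IG #> x" using coset_comb[OF z] by simp
      moreover have y: "Zmod.comb c z k \<in> ZG" using Zmod.comb_closed z by blast
      ultimately obtain n where n: "n \<in> IG" "x = n \<otimes> Zmod.comb c z k"
        using coset_eq_iff x center_subset by blast
      then have "x = Zmod.comb c z k \<otimes> n"
        using center_commute y n isolator_subset_center center_subset by blast
      then show "x \<in> {a \<otimes> b |a b. a \<in> Zmod.span z k \<and> b \<in> IG}"
        using n unfolding Zmod.span_def by blast
    qed
  qed
qed

lemma gcomm_mult_center_left: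
  assumes a: "a \<in> carrier G" and b: "b \<in> carrier G" and g: "g \<in> ZG"
  shows "gcomm G (a \<otimes> g) b = gcomm G a b"
proof -
  have gc: "g \<in> carrier G" using g center_subset by blast
  have "gcomm G (a \<otimes> g) b = inv ((b \<otimes> a) \<otimes> g) \<otimes> ((a \<otimes> b) \<otimes> g)"
    using gcomm_eq a b gc center_commute[OF g b] by (simp add: m_assoc)
  also have "\<dots> = inv g \<otimes> gcomm G a b \<otimes> g"
    using a b gc gcomm_eq by (simp add: inv_mult_group m_assoc)
  also have "\<dots> = gcomm G a b"
    using a b gc center_commute[OF g] conj_fixed_iff_commute by simp
  finally show ?thesis .
qed

lemma gcomm_mult_center_right:
  assumes a: "a \<in> carrier G" and b: "b \<in> carrier G" and g: "g \<in> ZG"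
  shows "gcomm G a (b \<otimes> g) = gcomm G a b"
proof -
  have gc: "g \<in> carrier G" using g center_subset by blast
  have "gcomm G a (b \<otimes> g) = inv ((b \<otimes> a) \<otimes> g) \<otimes> ((a \<otimes> b) \<otimes> g)"
    using gcomm_eq a b gc center_commute[OF g a] by (simp add: m_assoc)
  also have "\<dots> = inv g \<otimes> gcomm G a b \<otimes> g"
    using a b gc gcomm_eq by (simp add: inv_mult_group m_assoc)
  also have "\<dots> = gcomm G a b"
    using a b gc center_commute[OF g] conj_fixed_iff_commute by simp
  finally show ?thesis .
qed

lemma center_of_subset_of_central_product:
  assumes H: "H \<subseteq> carrier G" and prod: "\<forall>x\<in>carrier G. \<exists>h\<in>H. \<exists>g\<in>ZG. x = h \<otimes> g"
  shows "center_of G H \<subseteq> ZG"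
proof
  fix x assume "x \<in> center_of G H"
  then have xH: "x \<in> H" and xcomm: "\<forall>h\<in>H. x \<otimes> h = h \<otimes> x" unfolding center_of_def by blast+
  have xc: "x \<in> carrier G" using xH H by blast
  have "x \<otimes> y = y \<otimes> x" if y: "y \<in> carrier G" for y
  proof -
    obtain h g where hg: "h \<in> H" "g \<in> ZG" "y = h \<otimes> g" using prod y by blast
    have hc: "h \<in> carrier G" and gc: "g \<in> carrier G" using hg H center_subset by blast+
    have "x \<otimes> y = (x \<otimes> h) \<otimes> g" using hg xc hc gc by (simp add: m_assoc)
    also have "x \<otimes> h = h \<otimes> x" using xcomm hg by blast
    also have "h \<otimes> x \<otimes> g = h \<otimes> (g \<otimes> x)"
      using center_commute[OF hg(2) xc] hc xc gc by (simp add: m_assoc)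
    also have "\<dots> = y \<otimes> x" using hg xc hc gc by (simp add: m_assoc)
    finally show ?thesis .
  qed
  then show "x \<in> ZG" using xc unfolding center_of_def by blast
qed

lemma derived_subset_of_central_product:
  assumes H: "K_subgroup G pw H" and prod: "\<forall>x\<in>carrier G. \<exists>h\<in>H. \<exists>g\<in>ZG. x = h \<otimes> g"
  shows "DG \<subseteq> derived G pw H"
proof -
  have Hc: "H \<subseteq> carrier G" using K_subgroupD(1)[OF H] .
  have "gcomm G u v \<in> {gcomm G u v |u v. u \<in> H \<and> v \<in> H}" if u: "u \<in> carrier G" and v: "v \<in> carrier G" for u v
  proof -
    obtain h1 g1 where 1: "h1 \<in> H" "g1 \<in> ZG" "u = h1 \<otimes> g1" using prod u by blast
    obtain h2 g2 where 2: "h2 \<in> H" "g2 \<in> ZG" "v = h2 \<otimes> g2" using prod v by blast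
    have "gcomm G u v = gcomm G h1 h2"
      using 1 2 Hc gcomm_mult_center_left gcomm_mult_center_right center_subset by (auto simp: subset_iff)
    then show ?thesis using 1 2 by blast
  qed
  then have "{gcomm G u v |u v. u \<in> carrier G \<and> v \<in> carrier G} \<subseteq> derived G pw H"
    using subset_K_gen unfolding derived_def by blast
  moreover have "K_subgroup G pw (derived G pw H)"
    unfolding derived_def using Hc gcomm_closed by (intro K_gen_K_subgroup) blast
  ultimately show ?thesis unfolding derived_def[of G pw "carrier G"] by (rule K_gen_least[rotated])
qed

lemma addition_lifts_center_cosets:
  assumes add: "is_addition G pw G0" and x: "x \<in> ZG"
  shows "\<exists>y\<in>G0. IG #> x = IG #> y"
proof -
  obtain y n where yn: "y \<in> G0" "n \<in> IG" "x = y \<otimes> n"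
    using add x unfolding is_addition_def I_of_eq_isolator by blast
  have yc: "y \<in> carrier G" and nZ: "n \<in> ZG"
    using yn add isolator_subset_center center_subset unfolding is_addition_def by blast+
  have "x = n \<otimes> y" using yn(3) center_commute[OF nZ yc] by simp
  then have "IG #> y = IG #> x" using coset_eq_iff[OF yc] x center_subset yn(2) by blast
  then show ?thesis using yn(1) by auto
qed

lemma factorization_through_complement:
  assumes G0Z: "G0 \<subseteq> ZG" and lift: "\<forall>z\<in>ZG. \<exists>y\<in>G0. IG #> z = IG #> y"
    and S: "Qmod.submodule S" and sum: "\<forall>C\<in>rcosets IG. \<exists>q\<in>center_cosets. \<exists>s\<in>S. C = q <#> s"
    and x: "x \<in> carrier G"
  shows "\<exists>h y. h \<in> carrier G \<and> IG #> h \<in> S \<and> y \<in> G0 \<and> x = h \<otimes> y"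
proof -
  have "IG #> x \<in> rcosets IG" using x rcosets_isolator_iff by blast
  then obtain q s where qs: "q \<in> center_cosets" "s \<in> S" "IG #> x = q <#> s"
    using sum by blast
  obtain z where z: "z \<in> ZG" "q = IG #> z" using qs(1) unfolding center_cosets_def by blast
  obtain y where y: "y \<in> G0" "IG #> z = IG #> y" using lift z(1) by blast
  have yc: "y \<in> carrier G" and yZ: "y \<in> ZG" using y G0Z center_subset by blast+
  have s: "s \<in> rcosets IG" using qs(2) Qmod.submodule_subset[OF S] by blast
  have "IG #> (inv y \<otimes> x) = (IG #> inv y) <#> ((IG #> y) <#> s)"
    using coset_mult[of "inv y" x] yc x qs(3) z(2) y(2) by simp
  also have "\<dots> = ((IG #> inv y) <#> (IG #> y)) <#> s"
  proof -
    have "IG #> inv y \<in> rcosets IG" "IG #> y \<in> rcosets IG"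
      using yc rcosets_isolator_iff inv_closed by blast+
    then show ?thesis using Qmod.add_assoc s by simp
  qed
  also have "(IG #> inv y) <#> (IG #> y) = IG" using coset_mult yc coset_one by simp
  finally have "IG #> (inv y \<otimes> x) \<in> S" using Qmod.zr_add s qs(2) by simp
  moreover have "x = (inv y \<otimes> x) \<otimes> y"
  proof -
    have "inv y \<otimes> x \<otimes> y = inv y \<otimes> (y \<otimes> x)"
      using x yc center_commute[OF yZ x] by (simp add: m_assoc)
    also have "\<dots> = x" using x yc by (simp add: m_assoc[symmetric])
    finally show ?thesis by simp
  qed
  ultimately show ?thesis using x yc y(1) by blast
qed

lemma regular_of_complement:
  assumes add: "is_addition G pw G0" and S: "Qmod.submodule S"
    and sum: "\<forall>C\<in>rcosets IG. \<exists>q\<in>center_cosets. \<exists>s\<in>S. C = q <#> s"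
    and inter: "center_cosets \<inter> S \<subseteq> {IG}"
  shows "K_regular G pw"
proof -
  define H where "H = {x \<in> carrier G. IG #> x \<in> S}"
  have HK: "K_subgroup G pw H" unfolding H_def using K_subgroup_coset_preimage[OF S] .
  have Hc: "H \<subseteq> carrier G" unfolding H_def by blast
  have G0Z: "G0 \<subseteq> ZG" and G0I: "G0 \<inter> IG = {\<one>}" and G0K: "K_subgroup G pw G0"
    using add unfolding is_addition_def I_of_eq_isolator by auto
  have G0c: "G0 \<subseteq> carrier G" using G0Z center_subset by blast
  have in_isolator: "x \<in> IG" if "x \<in> H" "x \<in> ZG" for x
  proof -
    have "IG #> x \<in> center_cosets \<inter> S" using that unfolding H_def center_cosets_def by blast
    then show ?thesis using inter coset_eq_isolator_iff that(1) Hc by blast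
  qed
  have decomp: "\<forall>x\<in>carrier G. \<exists>h\<in>H. \<exists>y\<in>G0. x = h \<otimes> y"
    using factorization_through_complement[OF G0Z _ S sum] addition_lifts_center_cosets[OF add]
    unfolding H_def by blast
  then have prod: "{h \<otimes> g |h g. h \<in> H \<and> g \<in> G0} = carrier G" using Hc G0c by blast
  have prodZ: "\<forall>x\<in>carrier G. \<exists>h\<in>H. \<exists>g\<in>ZG. x = h \<otimes> g" using decomp G0Z by blast
  have "center_of G H \<subseteq> isolator G pw H (derived G pw H)"
  proof
    fix x assume x: "x \<in> center_of G H"
    then have "x \<in> H" "x \<in> ZG"
      using center_of_subset_of_central_product[OF Hc prodZ] unfolding center_of_def by blast+
    then show "x \<in> isolator G pw H (derived G pw H)"
      using in_isolator derived_subset_of_central_product[OF HK prodZ] unfolding isolator_def by blast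
  qed
  moreover have "H \<inter> G0 = {\<one>}"
    using in_isolator G0Z G0I K_subgroupD(2)[OF HK] K_subgroupD(2)[OF G0K] by blast
  ultimately show ?thesis unfolding K_regular_def using add HK prod by blast
qed

theorem K_regular_if_finitely_generated:
  assumes pid: "principal_ideal_domain TYPE('k)" and fg: "K_finitely_generated G pw"
  shows "K_regular G pw"
proof -
  note Z = center_cosets_submodule
  obtain m g where g: "Qmod.generates_mod {IG} g m" using cosets_finitely_generated[OF fg] by blast
  then have "Qmod.generates_mod center_cosets g m"
    using Qmod.generates_mod_mono Qmod.submodule_zr[OF Z] by blast
  then obtain n e where e: "Qmod.generates_mod center_cosets e n" "Qmod.independent_mod center_cosets e n"
    using Qmod.basis_modulo_pure_submodule[OF pid Z center_cosets_pure] by blast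
  have eA: "\<forall>i<n. e i \<in> rcosets IG" using e(1) unfolding Qmod.generates_mod_def by blast
  obtain k z where "\<forall>i<k. z i \<in> ZG" "\<forall>x\<in>ZG. \<exists>c. IG #> x = Qmod.comb c (\<lambda>i. IG #> z i) k"
    "Qmod.independent_mod {IG} (\<lambda>i. IG #> z i) k"
    using center_cosets_basis[OF pid g e] by blast
  then have "is_addition G pw (Zmod.span z k)" by (rule addition_of_lifted_basis)
  moreover have "Qmod.submodule (Qmod.span e n)" using Qmod.span_submodule[OF eA] .
  moreover have "\<forall>C\<in>rcosets IG. \<exists>q\<in>center_cosets. \<exists>s\<in>Qmod.span e n. C = q <#> s"
    using Qmod.generates_mod_span[OF e(1)] .
  moreover have "center_cosets \<inter> Qmod.span e n \<subseteq> {IG}"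
    using Qmod.independent_mod_inter_span[OF e(2) eA] .
  ultimately show ?thesis by (rule regular_of_complement)
qed

end

theorem mainTheorem11:
  fixes G :: "('g, 'm) monoid_scheme" and pw :: "'g \<Rightarrow> 'k::idom \<Rightarrow> 'g"
  assumes "binomial_domain TYPE('k)"
    and "principal_ideal_domain TYPE('k)"
    and "K_group2 G pw"
    and "K_finitely_generated G pw"
    and "K_torsion_free G pw"
  shows "K_regular G pw"
proof -
  interpret torsion_free_K_group2 G pw using assms(3,5) by unfold_locales
  show ?thesis using K_regular_if_finitely_generated assms(2,4) by blast
qed

end
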